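(* Let each $f_i$ be $L$-smooth and convex. Let $\{h^i\}_{i\in[n]}$ be such that $\frac{1}{n}\sum_{i=1}^{n}\mathbb{E}\left[\|h^i-\nabla f_i(x^\star)\|^2\right]\leq \alpha$. Then the iterates of EC-Approximate satisfy \[ E_{t+1} \leq \left( 1-\frac{\delta }{2}\right) E_t + \frac{8L}{\delta }F_t + \frac{4\alpha}{\delta } + \sigma^2. \]
   Context: Setting: distributed optimization $f^\star=\min_{x\in\mathbb{R}^d} f(x)$, $f(x)=\frac1n\sum_{i=1}^n f_i(x)$, with minimizer $x^\star$. Each client $i$ has a stochastic gradient oracle $g^i(x)$ with $\mathbb{E}[g^i(x)]=\nabla f_i(x)$ and $\mathbb{E}\|g^i(x)-\nabla f_i(x)\|^2\le\sigma^2$. $\mathcal{C}_\delta$ is a (possibly randomized) contractive compressor: $\mathbb{E}\|\mathcal{C}_\delta(x)-x\|^2\le(1-\delta)\|x\|^2$ for all $x$, with $0<\delta\le1$. EC-Approximate (error compensation with approximate bias correction): given fixed vectors $h^i$ and $h=\frac1n\sum_i h^i$, start from $x_0$, $e_0^i=0$; at each iteration $t$, client $i$ computes $g_t^i=g^i(x_t)$, $\hat\Delta_t^i=\mathcal{C}_\delta(e_t^i+g_t^i-h^i)$, $e_{t+1}^i=e_t^i+g_t^i-h^i-\hat\Delta_t^i$, and sends $\hat\Delta_t^i$; the server updates $x_{t+1}=x_t-\gamma h-\frac{\gamma}{n}\sum_{i=1}^n\hat\Delta_t^i$ with stepsize $\gamma$. Notation: $F_t=\mathbb{E}[f(x_t)]-f^\star$,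 $E_t=\frac1n\sum_{i=1}^n\mathbb{E}\|e_t^i\|^2$. *)

theory Defs
  imports "HOL-Probability.Probability"
begin

text \<open>Clients are indexed 0..n-1.  omega (t,i) = (s, q): s is the noise of the stochastic
  gradient oracle of client i at iteration t, q the internal randomness of the compressor
  used by client i at iteration t.  The state is (x_t, (e_t^i)_i).\<close>

primrec ec_iter ::
  "nat \<Rightarrow> (nat \<Rightarrow> 'a::euclidean_space \<Rightarrow> 's \<Rightarrow> 'a) \<Rightarrow> ('a \<Rightarrow> 'q \<Rightarrow> 'a) \<Rightarrow> (nat \<Rightarrow> 'a)
    \<Rightarrow> real \<Rightarrow> 'a \<Rightarrow> (nat \<times> nat \<Rightarrow> 's \<times> 'q) \<Rightarrow> nat \<Rightarrow> 'a \<times> (nat \<Rightarrow> 'a)"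
where
  "ec_iter n g C h \<gamma> x0 \<omega> 0 = (x0, \<lambda>i. 0)"
| "ec_iter n g C h \<gamma> x0 \<omega> (Suc t) =
     (let xt = fst (ec_iter n g C h \<gamma> x0 \<omega> t);
          et = snd (ec_iter n g C h \<gamma> x0 \<omega> t);
          hbar = (1 / real n) *\<^sub>R (\<Sum>i<n. h i);
          v = (\<lambda>i. et i + g i xt (fst (\<omega> (t, i))) - h i);
          D = (\<lambda>i. C (v i) (snd (\<omega> (t, i))))
      in (xt - \<gamma> *\<^sub>R hbar - (\<gamma> / real n) *\<^sub>R (\<Sum>i<n. D i), \<lambda>i. v i - D i))"

definition ec_space :: "(nat \<Rightarrow> 's measure) \<Rightarrow> 'q measure \<Rightarrow> (nat \<times> nat \<Rightarrow> 's \<times> 'q) measure" where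
  "ec_space S Q = PiM UNIV (\<lambda>(t, i). S i \<Otimes>\<^sub>M Q)"

definition ec_E :: "nat \<Rightarrow> (nat \<Rightarrow> 's measure) \<Rightarrow> 'q measure \<Rightarrow>
    (nat \<Rightarrow> 'a::euclidean_space \<Rightarrow> 's \<Rightarrow> 'a) \<Rightarrow> ('a \<Rightarrow> 'q \<Rightarrow> 'a) \<Rightarrow> (nat \<Rightarrow> 'a)
    \<Rightarrow> real \<Rightarrow> 'a \<Rightarrow> nat \<Rightarrow> ennreal" where
  "ec_E n S Q g C h \<gamma> x0 t =
     ennreal (1 / real n) *
     (\<Sum>i<n. \<integral>\<^sup>+ \<omega>. ennreal ((norm (snd (ec_iter n g C h \<gamma> x0 \<omega> t) i))\<^sup>2) \<partial>ec_space S Q)"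

text \<open>F_t = E[f(x_t)] - f^star (f - f^star is nonnegative, so this is the integral of it).\<close>
definition ec_F :: "nat \<Rightarrow> (nat \<Rightarrow> 's measure) \<Rightarrow> 'q measure \<Rightarrow>
    (nat \<Rightarrow> 'a::euclidean_space \<Rightarrow> 's \<Rightarrow> 'a) \<Rightarrow> ('a \<Rightarrow> 'q \<Rightarrow> 'a) \<Rightarrow> (nat \<Rightarrow> 'a)
    \<Rightarrow> real \<Rightarrow> 'a \<Rightarrow> ('a \<Rightarrow> real) \<Rightarrow> real \<Rightarrow> nat \<Rightarrow> ennreal" where
  "ec_F n S Q g C h \<gamma> x0 f fstar t =
     (\<integral>\<^sup>+ \<omega>. ennreal (f (fst (ec_iter n g C h \<gamma> x0 \<omega> t)) - fstar) \<partial>ec_space S Q)"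

end

theory Submission
  imports Defs
begin

(* Write v = e_t^i + g_t^i - h^i. The new error e_{t+1}^i is the compression residual of v, so,
  conditionally on everything except the fresh samples of client i at step t, contractivity and
  the bias-variance decomposition give E||e_{t+1}^i||^2 <= (1 - delta)
  (||e_t^i + grad f_i(x_t) - h^i||^2 + sigma^2). Young's inequality with weight delta/2 turns this
  into (1 - delta/2) ||e_t^i||^2 + (2/delta) ||grad f_i(x_t) - h^i||^2 + sigma^2, and
  ||grad f_i(x_t) - h^i||^2 <= 2 ||grad f_i(x_t) - grad f_i(xstar)||^2 + 2 ||h^i - grad f_i(xstar)||^2.
  On average over i the first term is at most 2 L (f(x_t) - fstar), by co-coercivity of the
  gradients of smooth convex functions and since the gradients sum to zero at the minimizer. *)

section \<open>Smooth convex functions\<close>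

lemma has_real_derivative_along_line:
  fixes f :: "'a::euclidean_space \<Rightarrow> real"
  assumes "\<And>x. (f has_derivative (\<lambda>y. G x \<bullet> y)) (at x)"
  shows "((\<lambda>s. f (a + s *\<^sub>R d)) has_real_derivative (G (a + s *\<^sub>R d) \<bullet> d)) (at s)"
proof -
  have "((\<lambda>s. a + s *\<^sub>R d) has_derivative (\<lambda>u. u *\<^sub>R d)) (at s)"
    by (auto intro!: derivative_eq_intros)
  from has_derivative_compose[OF this assms]
  have "((\<lambda>s. f (a + s *\<^sub>R d)) has_derivative (\<lambda>u. G (a + s *\<^sub>R d) \<bullet> (u *\<^sub>R d))) (at s)" .
  moreover have "(\<lambda>u. G (a + s *\<^sub>R d) \<bullet> (u *\<^sub>R d)) = (*) (G (a + s *\<^sub>R d) \<bullet> d)"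
    by (auto simp: fun_eq_iff)
  ultimately show ?thesis
    by (simp add: has_field_derivative_def)
qed

lemma convex_on_above_tangent_plane:
  fixes f :: "'a::euclidean_space \<Rightarrow> real"
  assumes deriv: "\<And>x. (f has_derivative (\<lambda>y. G x \<bullet> y)) (at x)" and convex: "convex_on UNIV f"
  shows "f x + G x \<bullet> (w - x) \<le> f w"
proof -
  let ?p = "\<lambda>s. f (x + s *\<^sub>R (w - x))"
  have "convex_on UNIV ?p"
  proof (rule convex_onI)
    fix t u v :: real assume t: "0 < t" "t < 1"
    have "x + ((1 - t) * u + t * v) *\<^sub>R (w - x)
        = (1 - t) *\<^sub>R (x + u *\<^sub>R (w - x)) + t *\<^sub>R (x + v *\<^sub>R (w - x))"
      by (simp add: algebra_simps)
    then show "?p ((1 - t) *\<^sub>R u + t *\<^sub>R v) \<le> (1 - t) * ?p u + t * ?p v"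
      using convex_onD[OF convex, of t] t by simp
  qed simp
  then have "?p 1 - ?p 0 \<ge> (G (x + 0 *\<^sub>R (w - x)) \<bullet> (w - x)) * (1 - 0)"
    by (rule convex_on_imp_above_tangent)
      (use has_real_derivative_along_line[OF deriv, where a=x and s=0 and d="w - x"]
        in \<open>auto intro: has_field_derivative_at_within\<close>)
  then show ?thesis by simp
qed

lemma lipschitz_constant_nonneg:
  fixes G :: "'a::euclidean_space \<Rightarrow> 'b::real_normed_vector"
  assumes "\<And>x y. norm (G x - G y) \<le> L * norm (x - y)"
  shows "0 \<le> L"
proof -
  obtain b :: 'a where "b \<in> Basis" using nonempty_Basis by blast
  then have "norm (0 - b) > 0" by (auto simp: nonzero_Basis)
  moreover have "0 \<le> L * norm (0 - b)" using assms[of 0 b] norm_ge_zero order_trans by blast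
  ultimately show ?thesis by (simp add: zero_le_mult_iff)
qed

lemma borel_measurable_lipschitz:
  fixes G :: "'a::euclidean_space \<Rightarrow> 'b::real_normed_vector"
  assumes "\<And>x y. norm (G x - G y) \<le> L * norm (x - y)"
  shows "G \<in> borel_measurable borel"
  using assms lipschitz_constant_nonneg[OF assms]
  by (intro borel_measurable_continuous_onI lipschitz_on_continuous_on[of L])
    (auto simp: lipschitz_on_def dist_norm)

lemma lipschitz_quadratic_upper_bound:
  fixes f :: "'a::euclidean_space \<Rightarrow> real"
  assumes deriv: "\<And>x. (f has_derivative (\<lambda>y. G x \<bullet> y)) (at x)"
    and lipschitz: "\<And>x y. norm (G x - G y) \<le> L * norm (x - y)"
  shows "f z \<le> f y + G y \<bullet> (z - y) + L / 2 * (norm (z - y))\<^sup>2"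
proof -
  let ?d = "z - y"
  let ?D = "\<lambda>s. G (y + s *\<^sub>R ?d) \<bullet> ?d - G y \<bullet> ?d - L * s * (norm ?d)\<^sup>2"
  let ?c = "\<lambda>s. f (y + s *\<^sub>R ?d) - s * (G y \<bullet> ?d) - L / 2 * s\<^sup>2 * (norm ?d)\<^sup>2"
  have deriv_c: "(?c has_real_derivative ?D s) (at s)" for s
    by (auto intro!: derivative_eq_intros has_real_derivative_along_line[OF deriv]
        simp: power2_eq_square)
  have deriv_c_nonpos: "?D s \<le> 0" if "0 \<le> s" for s
  proof -
    have "G (y + s *\<^sub>R ?d) \<bullet> ?d - G y \<bullet> ?d \<le> norm (G (y + s *\<^sub>R ?d) - G y) * norm ?d"
      by (metis inner_diff_left norm_cauchy_schwarz)
    also have "\<dots> \<le> L * norm (s *\<^sub>R ?d) * norm ?d"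
      using lipschitz[of "y + s *\<^sub>R ?d" y] by (intro mult_right_mono) auto
    finally show ?thesis using that by (simp add: power2_eq_square mult.assoc)
  qed
  then have "\<exists>D. (?c has_real_derivative D) (at s) \<and> D \<le> 0" if "0 \<le> s" for s
    using deriv_c that by blast
  then have "?c 1 \<le> ?c 0"
    by (intro DERIV_nonpos_imp_nonincreasing[of 0 1 ?c]) auto
  then show ?thesis by (simp add: algebra_simps)
qed

lemma convex_lipschitz_gradient_cocoercive:
  fixes f :: "'a::euclidean_space \<Rightarrow> real"
  assumes deriv: "\<And>x. (f has_derivative (\<lambda>y. G x \<bullet> y)) (at x)"
    and lipschitz: "\<And>x y. norm (G x - G y) \<le> L * norm (x - y)"
    and convex: "convex_on UNIV f"
  shows "(norm (G y - G x))\<^sup>2 \<le> 2 * L * (f y - f x - G x \<bullet> (y - x))"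
proof (cases "L = 0")
  case True
  then show ?thesis using lipschitz[of y x] by simp
next
  case False
  with lipschitz_constant_nonneg[OF lipschitz] have L: "L > 0" by simp
  define u where "u = G y - G x"
  define w where "w = y - (1 / L) *\<^sub>R u"
  have u_sq: "G y \<bullet> u - G x \<bullet> u = (norm u)\<^sup>2"
    by (simp add: u_def power2_norm_eq_inner inner_diff_left)
  \<comment> \<open>w is a gradient step from y: the tangent plane at x lies below f w,
    the quadratic bound at y above it\<close>
  have "f x + G x \<bullet> (w - x) \<le> f w"
    by (rule convex_on_above_tangent_plane[OF deriv convex])
  also have "f w \<le> f y + G y \<bullet> (w - y) + L / 2 * (norm (w - y))\<^sup>2"
    by (rule lipschitz_quadratic_upper_bound[OF deriv lipschitz])
  finally have "f x + G x \<bullet> (y - x) - (G x \<bullet> u) / L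
      \<le> f y - (G y \<bullet> u) / L + L / 2 * (norm u / L)\<^sup>2"
    using L by (simp add: w_def inner_diff_right)
  moreover from u_sq have "(G y \<bullet> u) / L - (G x \<bullet> u) / L = 2 * ((norm u)\<^sup>2 / (2 * L))"
    by (simp add: diff_divide_distrib[symmetric])
  moreover have "L / 2 * (norm u / L)\<^sup>2 = (norm u)\<^sup>2 / (2 * L)"
    using L by (simp add: power2_eq_square)
  ultimately have "(norm u)\<^sup>2 / (2 * L) \<le> f y - f x - G x \<bullet> (y - x)"
    by linarith
  then show ?thesis using L by (simp add: u_def pos_divide_le_eq mult.commute)
qed

lemma sum_gradients_zero_at_minimizer:
  fixes f :: "nat \<Rightarrow> 'a::euclidean_space \<Rightarrow> real"
  assumes n: "n \<ge> 1"
    and grad: "\<And>i x. i < n \<Longrightarrow> (f i has_derivative (\<lambda>y. G i x \<bullet> y)) (at x)"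
    and minimizer: "\<And>x. (1 / real n) * (\<Sum>i<n. f i xstar) \<le> (1 / real n) * (\<Sum>i<n. f i x)"
  shows "(\<Sum>i<n. G i xstar) = 0"
proof -
  define d where "d = (\<Sum>i<n. G i xstar)"
  let ?p = "\<lambda>s. (1 / real n) * (\<Sum>i<n. f i (xstar + s *\<^sub>R (- d)))"
  have "(?p has_real_derivative (1 / real n) * (\<Sum>i<n. G i (xstar + 0 *\<^sub>R (- d)) \<bullet> (- d))) (at 0)"
    by (intro DERIV_cmult DERIV_sum has_real_derivative_along_line grad) auto
  then have "(1 / real n) * (\<Sum>i<n. G i (xstar + 0 *\<^sub>R (- d)) \<bullet> (- d)) = 0"
    by (rule DERIV_local_min[of _ _ _ 1]) (use minimizer in auto)
  then have "d \<bullet> d = 0"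
    using n by (simp add: inner_sum_left sum_negf d_def)
  then show ?thesis by (simp add: d_def)
qed

lemma mean_sq_gradient_dist_le_gap:
  fixes f :: "nat \<Rightarrow> 'a::euclidean_space \<Rightarrow> real"
  assumes n: "n \<ge> 1"
    and grad: "\<And>i x. i < n \<Longrightarrow> (f i has_derivative (\<lambda>y. G i x \<bullet> y)) (at x)"
    and smooth: "\<And>i x y. i < n \<Longrightarrow> norm (G i x - G i y) \<le> L * norm (x - y)"
    and convex: "\<And>i. i < n \<Longrightarrow> convex_on UNIV (f i)"
    and minimizer: "\<And>x. (1 / real n) * (\<Sum>i<n. f i xstar) \<le> (1 / real n) * (\<Sum>i<n. f i x)"
  shows "(1 / real n) * (\<Sum>i<n. (norm (G i x - G i xstar))\<^sup>2)
         \<le> 2 * L * ((1 / real n) * (\<Sum>i<n. f i x) - (1 / real n) * (\<Sum>i<n. f i xstar))"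
proof -
  have "(\<Sum>i<n. (norm (G i x - G i xstar))\<^sup>2)
      \<le> (\<Sum>i<n. 2 * L * (f i x - f i xstar - G i xstar \<bullet> (x - xstar)))"
    by (intro sum_mono convex_lipschitz_gradient_cocoercive grad smooth convex) auto
  also have "\<dots> = 2 * L * ((\<Sum>i<n. f i x) - (\<Sum>i<n. f i xstar) - (\<Sum>i<n. G i xstar) \<bullet> (x - xstar))"
    by (simp add: sum_distrib_left[symmetric] sum_subtractf inner_sum_left)
  also have "\<dots> = 2 * L * ((\<Sum>i<n. f i x) - (\<Sum>i<n. f i xstar))"
    using sum_gradients_zero_at_minimizer[OF n grad minimizer] by simp
  finally have "(1 / real n) * (\<Sum>i<n. (norm (G i x - G i xstar))\<^sup>2)
      \<le> (1 / real n) * (2 * L * ((\<Sum>i<n. f i x) - (\<Sum>i<n. f i xstar)))"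
    by (rule mult_left_mono) simp
  then show ?thesis by (simp add: algebra_simps)
qed

lemma norm_add_sq_le_weighted:
  fixes a b :: "'a::real_inner"
  assumes "0 < \<epsilon>"
  shows "(norm (a + b))\<^sup>2 \<le> (1 + \<epsilon>) * (norm a)\<^sup>2 + (1 + 1 / \<epsilon>) * (norm b)\<^sup>2"
proof -
  have "(norm (a + b))\<^sup>2 = (norm a)\<^sup>2 + 2 * (a \<bullet> b) + (norm b)\<^sup>2"
    by (simp add: power2_norm_eq_inner inner_add_left inner_add_right inner_commute)
  moreover have "a \<bullet> b \<le> norm a * norm b"
    by (rule norm_cauchy_schwarz)
  moreover have "\<epsilon> * (norm a - norm b / \<epsilon>)\<^sup>2
      = \<epsilon> * (norm a)\<^sup>2 - 2 * (norm a * norm b) + (norm b)\<^sup>2 / \<epsilon>"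
    using assms by (simp add: power2_eq_square field_simps)
  moreover have "0 \<le> \<epsilon> * (norm a - norm b / \<epsilon>)\<^sup>2"
    using assms by simp
  ultimately show ?thesis by (simp add: algebra_simps divide_inverse)
qed

lemma contraction_absorbs_norm_add_sq:
  fixes e b :: "'a::real_inner"
  assumes "0 < \<delta>" "\<delta> \<le> 1"
  shows "(1 - \<delta>) * ((norm (e + b))\<^sup>2 + \<sigma>\<^sup>2)
           \<le> (1 - \<delta> / 2) * (norm e)\<^sup>2 + (2 / \<delta>) * (norm b)\<^sup>2 + \<sigma>\<^sup>2"
proof -
  have "(1 - \<delta>) * ((norm (e + b))\<^sup>2 + \<sigma>\<^sup>2)
      \<le> (1 - \<delta>) * ((1 + \<delta> / 2) * (norm e)\<^sup>2 + (1 + 2 / \<delta>) * (norm b)\<^sup>2 + \<sigma>\<^sup>2)"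
    using norm_add_sq_le_weighted[of "\<delta> / 2" e b] assms by (intro mult_left_mono) auto
  also have "\<dots> = ((1 - \<delta>) * (1 + \<delta> / 2)) * (norm e)\<^sup>2
      + ((1 - \<delta>) * (1 + 2 / \<delta>)) * (norm b)\<^sup>2 + (1 - \<delta>) * \<sigma>\<^sup>2"
    by (simp add: algebra_simps)
  also have "\<dots> \<le> (1 - \<delta> / 2) * (norm e)\<^sup>2 + (2 / \<delta>) * (norm b)\<^sup>2 + \<sigma>\<^sup>2"
  proof (intro add_mono mult_right_mono)
    show "(1 - \<delta>) * (1 + \<delta> / 2) \<le> 1 - \<delta> / 2" "(1 - \<delta>) * (1 + 2 / \<delta>) \<le> 2 / \<delta>"
      using assms by (simp_all add: field_simps)
    show "(1 - \<delta>) * \<sigma>\<^sup>2 \<le> \<sigma>\<^sup>2"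
      using assms by (simp add: mult_left_le_one_le)
  qed simp_all
  finally show ?thesis .
qed

lemma error_recursion_pointwise:
  fixes f :: "nat \<Rightarrow> 'a::euclidean_space \<Rightarrow> real"
  assumes n: "n \<ge> 1"
    and grad: "\<And>i x. i < n \<Longrightarrow> (f i has_derivative (\<lambda>y. G i x \<bullet> y)) (at x)"
    and smooth: "\<And>i x y. i < n \<Longrightarrow> norm (G i x - G i y) \<le> L * norm (x - y)"
    and convex: "\<And>i. i < n \<Longrightarrow> convex_on UNIV (f i)"
    and minimizer: "\<And>x. (1 / real n) * (\<Sum>i<n. f i xstar) \<le> (1 / real n) * (\<Sum>i<n. f i x)"
    and delta: "0 < \<delta>" "\<delta> \<le> 1"
    and alpha: "(1 / real n) * (\<Sum>i<n. (norm (h i - G i xstar))\<^sup>2) \<le> \<alpha>"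
  shows "(1 / real n) * (\<Sum>i<n. (1 - \<delta>) * ((norm (e i + G i x - h i))\<^sup>2 + \<sigma>\<^sup>2))
     \<le> (1 - \<delta> / 2) * ((1 / real n) * (\<Sum>i<n. (norm (e i))\<^sup>2))
       + (8 * L / \<delta>) * ((1 / real n) * (\<Sum>i<n. f i x) - (1 / real n) * (\<Sum>i<n. f i xstar))
       + 4 * \<alpha> / \<delta> + \<sigma>\<^sup>2"
proof -
  let ?mean = "\<lambda>a. (1 / real n) * (\<Sum>i<n. a i)"
  let ?gap = "?mean (\<lambda>i. f i x) - ?mean (\<lambda>i. f i xstar)"
  have "?mean (\<lambda>i. (norm (G i x - h i))\<^sup>2)
      \<le> ?mean (\<lambda>i. 2 * (norm (G i x - G i xstar))\<^sup>2 + 2 * (norm (G i xstar - h i))\<^sup>2)"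
    using norm_add_sq_le_weighted[of 1 "G i x - G i xstar" "G i xstar - h i" for i]
    by (intro mult_left_mono sum_mono) auto
  also have "\<dots> = 2 * ?mean (\<lambda>i. (norm (G i x - G i xstar))\<^sup>2)
      + 2 * ?mean (\<lambda>i. (norm (h i - G i xstar))\<^sup>2)"
    by (simp add: sum.distrib sum_distrib_left[symmetric] norm_minus_commute algebra_simps)
  also have "\<dots> \<le> 4 * L * ?gap + 2 * \<alpha>"
    using mean_sq_gradient_dist_le_gap[OF n grad smooth convex minimizer, of x] alpha by linarith
  finally have grad_h: "?mean (\<lambda>i. (norm (G i x - h i))\<^sup>2) \<le> 4 * L * ?gap + 2 * \<alpha>" .
  have "?mean (\<lambda>i. (1 - \<delta>) * ((norm (e i + G i x - h i))\<^sup>2 + \<sigma>\<^sup>2))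
      \<le> ?mean (\<lambda>i. (1 - \<delta> / 2) * (norm (e i))\<^sup>2 + (2 / \<delta>) * (norm (G i x - h i))\<^sup>2 + \<sigma>\<^sup>2)"
    using contraction_absorbs_norm_add_sq[OF delta, of "e i" "G i x - h i" \<sigma> for i]
    by (intro mult_left_mono sum_mono) (auto simp: add_diff_eq)
  also have "\<dots> = (1 - \<delta> / 2) * ?mean (\<lambda>i. (norm (e i))\<^sup>2)
      + (2 / \<delta>) * ?mean (\<lambda>i. (norm (G i x - h i))\<^sup>2) + \<sigma>\<^sup>2"
    using n by (simp only: sum.distrib sum_distrib_left[symmetric] sum_constant) (simp add: field_simps)
  also have "\<dots> \<le> (1 - \<delta> / 2) * ?mean (\<lambda>i. (norm (e i))\<^sup>2)
      + (2 / \<delta>) * (4 * L * ?gap + 2 * \<alpha>) + \<sigma>\<^sup>2"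
    using grad_h delta by (intro add_mono mult_left_mono order_refl) auto
  also have "\<dots> = (1 - \<delta> / 2) * ?mean (\<lambda>i. (norm (e i))\<^sup>2) + (8 * L / \<delta>) * ?gap + 4 * \<alpha> / \<delta> + \<sigma>\<^sup>2"
    by (simp add: algebra_simps)
  finally show ?thesis .
qed

section \<open>Second moments and infinite product measures\<close>

lemma (in prob_space) nn_integral_norm_sq_bias_variance:
  fixes u :: "'a \<Rightarrow> 'b::euclidean_space"
  assumes u: "integrable M u" "expectation u = m"
    and var: "(\<integral>\<^sup>+ s. ennreal ((norm (u s - m))\<^sup>2) \<partial>M) < \<infinity>"
  shows "(\<integral>\<^sup>+ s. ennreal ((norm (a + u s))\<^sup>2) \<partial>M)
           = ennreal ((norm (a + m))\<^sup>2) + (\<integral>\<^sup>+ s. ennreal ((norm (u s - m))\<^sup>2) \<partial>M)"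
proof -
  define w where "w = (\<lambda>s. u s - m)"
  have w: "integrable M w"
    using u by (simp add: w_def)
  have w_mean: "expectation w = 0"
    using u by (simp add: w_def prob_space)
  have w_sq: "integrable M (\<lambda>s. (norm (w s))\<^sup>2)"
    using var u by (intro integrableI_bounded) (auto simp: w_def)
  have expand: "(norm (a + u s))\<^sup>2 = (norm (a + m))\<^sup>2 + 2 * ((a + m) \<bullet> w s) + (norm (w s))\<^sup>2" for s
    by (simp add: w_def power2_norm_eq_inner algebra_simps inner_commute)
  have "(\<integral>\<^sup>+ s. ennreal ((norm (a + u s))\<^sup>2) \<partial>M)
      = ennreal (\<integral>s. (norm (a + m))\<^sup>2 + 2 * ((a + m) \<bullet> w s) + (norm (w s))\<^sup>2 \<partial>M)"
    unfolding expand
    by (intro nn_integral_eq_integral AE_I2) (use w w_sq in simp, simp flip: expand)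
  also have "\<dots> = ennreal ((norm (a + m))\<^sup>2 + expectation (\<lambda>s. (norm (w s))\<^sup>2))"
    using w w_sq w_mean by (simp add: prob_space)
  also have "\<dots> = ennreal ((norm (a + m))\<^sup>2) + (\<integral>\<^sup>+ s. ennreal ((norm (w s))\<^sup>2) \<partial>M)"
    using w_sq by (simp add: nn_integral_eq_integral integral_nonneg_AE)
  finally show ?thesis by (simp add: w_def)
qed

lemma nn_integral_compression_residual_le:
  fixes v :: "'s \<Rightarrow> 'a::euclidean_space" and C :: "'a \<Rightarrow> 'q \<Rightarrow> 'a"
  assumes Q: "sigma_finite_measure Q" and v: "v \<in> borel_measurable N"
    and C_meas: "(\<lambda>(v, q). C v q) \<in> borel_measurable (borel \<Otimes>\<^sub>M Q)"
    and contractive: "\<And>v. (\<integral>\<^sup>+ q. ennreal ((norm (C v q - v))\<^sup>2) \<partial>Q) \<le> ennreal ((1 - \<delta>) * (norm v)\<^sup>2)"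
  shows "(\<integral>\<^sup>+ z. ennreal ((norm (v (fst z) - C (v (fst z)) (snd z)))\<^sup>2) \<partial>(N \<Otimes>\<^sub>M Q))
           \<le> ennreal (1 - \<delta>) * (\<integral>\<^sup>+ s. ennreal ((norm (v s))\<^sup>2) \<partial>N)"
proof -
  have "(\<lambda>z. C (v (fst z)) (snd z)) \<in> borel_measurable (N \<Otimes>\<^sub>M Q)"
    by (rule measurable_Pair_compose_split[OF C_meas measurable_compose[OF measurable_fst v] measurable_snd])
  then have "(\<integral>\<^sup>+ z. ennreal ((norm (v (fst z) - C (v (fst z)) (snd z)))\<^sup>2) \<partial>(N \<Otimes>\<^sub>M Q))
      = (\<integral>\<^sup>+ s. \<integral>\<^sup>+ q. ennreal ((norm (C (v s) q - v s))\<^sup>2) \<partial>Q \<partial>N)"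
    using v by (subst sigma_finite_measure.nn_integral_fst[OF Q, symmetric])
      (auto simp: norm_minus_commute)
  also have "\<dots> \<le> (\<integral>\<^sup>+ s. ennreal (1 - \<delta>) * ennreal ((norm (v s))\<^sup>2) \<partial>N)"
    using contractive by (intro nn_integral_mono) (simp add: ennreal_mult'')
  also have "\<dots> = ennreal (1 - \<delta>) * (\<integral>\<^sup>+ s. ennreal ((norm (v s))\<^sup>2) \<partial>N)"
    using v by (intro nn_integral_cmult) measurable
  finally show ?thesis .
qed

lemma nn_integral_PiM_split_coordinate:
  fixes M :: "'i \<Rightarrow> 'm measure"
  assumes M: "\<And>j. prob_space (M j)" and F: "F \<in> borel_measurable (PiM UNIV M)"
  shows "(\<integral>\<^sup>+ \<omega>. F \<omega> \<partial>PiM UNIV M) = (\<integral>\<^sup>+ Y. \<integral>\<^sup>+ z. F (Y(k := z)) \<partial>M k \<partial>PiM (UNIV - {k}) M)"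
proof -
  let ?upd = "\<lambda>(z, Y). Y(k := z)"
  have upd: "?upd \<in> measurable (M k \<Otimes>\<^sub>M PiM (UNIV - {k}) M) (PiM UNIV M)"
    using measurable_fun_upd[where I=UNIV and J="UNIV - {k}" and i=k, OF _ measurable_snd measurable_fst]
    by (simp add: case_prod_beta')
  have "distr (M k \<Otimes>\<^sub>M PiM (UNIV - {k}) M) (PiM UNIV M) ?upd = PiM UNIV M"
    using distr_pair_PiM_eq_PiM[of "UNIV - {k}" M k] M by (simp add: insert_absorb)
  then have "(\<integral>\<^sup>+ \<omega>. F \<omega> \<partial>PiM UNIV M) = (\<integral>\<^sup>+ p. F (?upd p) \<partial>(M k \<Otimes>\<^sub>M PiM (UNIV - {k}) M))"
    using nn_integral_distr[OF upd] F by metis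
  also have "\<dots> = (\<integral>\<^sup>+ Y. \<integral>\<^sup>+ z. F (Y(k := z)) \<partial>M k \<partial>PiM (UNIV - {k}) M)"
  proof -
    interpret pair_sigma_finite "M k" "PiM (UNIV - {k}) M"
      unfolding pair_sigma_finite_def by (intro conjI prob_space_imp_sigma_finite M prob_space_PiM)
    show ?thesis
      using nn_integral_snd[OF measurable_compose[OF upd F]] by (simp add: case_prod_beta')
  qed
  finally show ?thesis .
qed

lemma nn_integral_PiM_le_by_coordinate:
  fixes M :: "'i \<Rightarrow> 'm measure"
  assumes M: "\<And>j. prob_space (M j)"
    and F: "F \<in> borel_measurable (PiM UNIV M)" and B: "B \<in> borel_measurable (PiM UNIV M)"
    and B_indep: "\<And>Y z. B (Y(k := z)) = B Y"
    and section_le: "\<And>Y. (\<integral>\<^sup>+ z. F (Y(k := z)) \<partial>M k) \<le> B Y"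
  shows "(\<integral>\<^sup>+ \<omega>. F \<omega> \<partial>PiM UNIV M) \<le> (\<integral>\<^sup>+ \<omega>. B \<omega> \<partial>PiM UNIV M)"
proof -
  have "(\<integral>\<^sup>+ \<omega>. F \<omega> \<partial>PiM UNIV M) \<le> (\<integral>\<^sup>+ Y. B Y \<partial>PiM (UNIV - {k}) M)"
    unfolding nn_integral_PiM_split_coordinate[OF M F, where k=k] by (intro nn_integral_mono section_le)
  also have "\<dots> = (\<integral>\<^sup>+ Y. \<integral>\<^sup>+ z. B (Y(k := z)) \<partial>M k \<partial>PiM (UNIV - {k}) M)"
    by (simp add: B_indep prob_space.emeasure_space_1[OF M])
  also have "\<dots> = (\<integral>\<^sup>+ \<omega>. B \<omega> \<partial>PiM UNIV M)"
    by (rule nn_integral_PiM_split_coordinate[OF M B, symmetric])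
  finally show ?thesis .
qed

lemma nn_integral_scaled_sum_ennreal:
  assumes "\<And>i. i \<in> I \<Longrightarrow> F i \<in> borel_measurable M" "\<And>i \<omega>. i \<in> I \<Longrightarrow> 0 \<le> F i \<omega>" "0 \<le> c"
  shows "ennreal c * (\<Sum>i\<in>I. \<integral>\<^sup>+ \<omega>. ennreal (F i \<omega>) \<partial>M) = (\<integral>\<^sup>+ \<omega>. ennreal (c * (\<Sum>i\<in>I. F i \<omega>)) \<partial>M)"
proof -
  have "(\<Sum>i\<in>I. \<integral>\<^sup>+ \<omega>. ennreal (F i \<omega>) \<partial>M) = (\<integral>\<^sup>+ \<omega>. ennreal (\<Sum>i\<in>I. F i \<omega>) \<partial>M)"
    using assms by (subst nn_integral_sum[symmetric]) auto
  then show ?thesis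
    using assms by (simp add: nn_integral_cmult[symmetric] ennreal_mult sum_nonneg)
qed

lemma (in prob_space) nn_integral_affine_ennreal:
  assumes "A \<in> borel_measurable M" "B \<in> borel_measurable M" "\<And>\<omega>. 0 \<le> A \<omega>" "\<And>\<omega>. 0 \<le> B \<omega>"
    and "0 \<le> a" "0 \<le> b" "0 \<le> c"
  shows "(\<integral>\<^sup>+ \<omega>. ennreal (a * A \<omega> + b * B \<omega> + c) \<partial>M)
           = ennreal a * (\<integral>\<^sup>+ \<omega>. ennreal (A \<omega>) \<partial>M) + ennreal b * (\<integral>\<^sup>+ \<omega>. ennreal (B \<omega>) \<partial>M) + ennreal c"
proof -
  have "ennreal (a * A \<omega> + b * B \<omega> + c) = ennreal a * ennreal (A \<omega>) + ennreal b * ennreal (B \<omega>) + ennreal c"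
    for \<omega>
    using assms by (simp add: ennreal_mult)
  then show ?thesis
    using assms by (simp add: nn_integral_add nn_integral_cmult emeasure_space_1)
qed

section \<open>The EC-Approximate iteration\<close>

lemma ec_iter_cong_past:
  assumes "\<And>t' j. t' < t \<Longrightarrow> \<omega> (t', j) = \<omega>' (t', j)"
  shows "ec_iter n g C h \<gamma> x0 \<omega> t = ec_iter n g C h \<gamma> x0 \<omega>' t"
  using assms by (induction t) (auto simp: Let_def)

locale ec_model =
  fixes n :: nat and g :: "nat \<Rightarrow> 'a::euclidean_space \<Rightarrow> 's \<Rightarrow> 'a" and S :: "nat \<Rightarrow> 's measure"
    and C :: "'a \<Rightarrow> 'q \<Rightarrow> 'a" and Q :: "'q measure" and h :: "nat \<Rightarrow> 'a"
    and \<gamma> :: real and x0 :: 'a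
  assumes S_prob: "\<And>i. prob_space (S i)"
    and g_meas [measurable]: "\<And>i. (\<lambda>(x, s). g i x s) \<in> borel_measurable (borel \<Otimes>\<^sub>M S i)"
    and Q_prob: "prob_space Q"
    and C_meas [measurable]: "(\<lambda>(v, q). C v q) \<in> borel_measurable (borel \<Otimes>\<^sub>M Q)"
begin

abbreviation ec_x :: "(nat \<times> nat \<Rightarrow> 's \<times> 'q) \<Rightarrow> nat \<Rightarrow> 'a" where
  "ec_x \<omega> t \<equiv> fst (ec_iter n g C h \<gamma> x0 \<omega> t)"

abbreviation ec_e :: "(nat \<times> nat \<Rightarrow> 's \<times> 'q) \<Rightarrow> nat \<Rightarrow> nat \<Rightarrow> 'a" where
  "ec_e \<omega> t \<equiv> snd (ec_iter n g C h \<gamma> x0 \<omega> t)"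

abbreviation coord :: "nat \<times> nat \<Rightarrow> ('s \<times> 'q) measure" where
  "coord \<equiv> \<lambda>(t, i). S i \<Otimes>\<^sub>M Q"

lemma prob_space_coord: "prob_space (coord k)"
  using S_prob Q_prob by (auto intro!: prob_space_pair split: prod.split)

lemma ec_space_eq_PiM: "ec_space S Q = PiM UNIV coord"
  by (simp add: ec_space_def)

lemma prob_space_ec_space: "prob_space (ec_space S Q)"
  unfolding ec_space_eq_PiM by (intro prob_space_PiM prob_space_coord)

lemma measurable_ec_iter:
  assumes "{(t', j). t' < t} \<subseteq> J"
  shows "(\<lambda>\<omega>. ec_x \<omega> t) \<in> borel_measurable (PiM J coord)"
    and "(\<lambda>\<omega>. ec_e \<omega> t i) \<in> borel_measurable (PiM J coord)"
proof -
  have "(\<lambda>\<omega>. ec_x \<omega> t) \<in> borel_measurable (PiM J coord) \<and>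
      (\<forall>i. (\<lambda>\<omega>. ec_e \<omega> t i) \<in> borel_measurable (PiM J coord))"
    using assms
  proof (induction t)
    case 0
    then show ?case by simp
  next
    case (Suc t)
    have "{(t', j). t' < t} \<subseteq> J"
      using Suc.prems by auto
    with Suc.IH have [measurable]: "(\<lambda>\<omega>. ec_x \<omega> t) \<in> borel_measurable (PiM J coord)"
        "\<And>i. (\<lambda>\<omega>. ec_e \<omega> t i) \<in> borel_measurable (PiM J coord)"
      by blast+
    have [measurable]: "(\<lambda>\<omega>. \<omega> (t, i)) \<in> measurable (PiM J coord) (S i \<Otimes>\<^sub>M Q)" for i
      using measurable_component_singleton[of "(t, i)" J coord] Suc.prems by auto
    show ?case
      by (simp add: Let_def) measurable
  qed
  then show "(\<lambda>\<omega>. ec_x \<omega> t) \<in> borel_measurable (PiM J coord)"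
    and "(\<lambda>\<omega>. ec_e \<omega> t i) \<in> borel_measurable (PiM J coord)"
    by auto
qed

lemma nn_integral_ec_e_Suc_le:
  fixes G :: "'a \<Rightarrow> 'a"
  assumes unbiased: "\<And>x. integrable (S i) (g i x)" "\<And>x. (\<integral>s. g i x s \<partial>S i) = G x"
    and variance: "\<And>x. (\<integral>\<^sup>+ s. ennreal ((norm (g i x s - G x))\<^sup>2) \<partial>S i) \<le> ennreal (\<sigma>\<^sup>2)"
    and contractive: "\<And>v. (\<integral>\<^sup>+ q. ennreal ((norm (C v q - v))\<^sup>2) \<partial>Q) \<le> ennreal ((1 - \<delta>) * (norm v)\<^sup>2)"
    and G_meas [measurable]: "G \<in> borel_measurable borel"
  shows "(\<integral>\<^sup>+ \<omega>. ennreal ((norm (ec_e \<omega> (Suc t) i))\<^sup>2) \<partial>ec_space S Q)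
    \<le> (\<integral>\<^sup>+ \<omega>. ennreal ((1 - \<delta>) * ((norm (ec_e \<omega> t i + G (ec_x \<omega> t) - h i))\<^sup>2 + \<sigma>\<^sup>2)) \<partial>ec_space S Q)"
  unfolding ec_space_eq_PiM
  \<comment> \<open>condition on all samples except those of client i at step t;
    x_t and e_t depend only on earlier ones\<close>
proof (rule nn_integral_PiM_le_by_coordinate[OF prob_space_coord, where k="(t, i)"])
  have [measurable]: "(\<lambda>\<omega>. ec_x \<omega> t) \<in> borel_measurable (PiM UNIV coord)"
      "\<And>j. (\<lambda>\<omega>. ec_e \<omega> t j) \<in> borel_measurable (PiM UNIV coord)"
      "(\<lambda>\<omega>. ec_e \<omega> (Suc t) i) \<in> borel_measurable (PiM UNIV coord)"
    by (intro measurable_ec_iter; simp)+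
  show "(\<lambda>\<omega>. ennreal ((norm (ec_e \<omega> (Suc t) i))\<^sup>2)) \<in> borel_measurable (PiM UNIV coord)"
      "(\<lambda>\<omega>. ennreal ((1 - \<delta>) * ((norm (ec_e \<omega> t i + G (ec_x \<omega> t) - h i))\<^sup>2 + \<sigma>\<^sup>2)))
         \<in> borel_measurable (PiM UNIV coord)"
    by measurable
  have past: "ec_iter n g C h \<gamma> x0 (Y((t, i) := z)) t = ec_iter n g C h \<gamma> x0 Y t" for Y z
    by (rule ec_iter_cong_past) auto
  then show "\<And>Y z. ennreal ((1 - \<delta>) *
        ((norm (ec_e (Y((t, i) := z)) t i + G (ec_x (Y((t, i) := z)) t) - h i))\<^sup>2 + \<sigma>\<^sup>2))
      = ennreal ((1 - \<delta>) * ((norm (ec_e Y t i + G (ec_x Y t) - h i))\<^sup>2 + \<sigma>\<^sup>2))"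
    by simp
  fix Y
  let ?a = "ec_e Y t i - h i"
  let ?v = "\<lambda>s. ?a + g i (ec_x Y t) s"
  interpret S: prob_space "S i" by (rule S_prob)
  have [measurable]: "?v \<in> borel_measurable (S i)"
    by measurable
  have "(\<integral>\<^sup>+ s. ennreal ((norm (?v s))\<^sup>2) \<partial>S i)
      = ennreal ((norm (?a + G (ec_x Y t)))\<^sup>2)
        + (\<integral>\<^sup>+ s. ennreal ((norm (g i (ec_x Y t) s - G (ec_x Y t)))\<^sup>2) \<partial>S i)"
    using unbiased variance[of "ec_x Y t"]
    by (intro S.nn_integral_norm_sq_bias_variance) (auto simp: ennreal_less_top le_less_trans)
  also have "\<dots> \<le> ennreal ((norm (ec_e Y t i + G (ec_x Y t) - h i))\<^sup>2 + \<sigma>\<^sup>2)"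
    using variance[of "ec_x Y t"] by (simp add: add_mono algebra_simps)
  finally have second_moment:
    "(\<integral>\<^sup>+ s. ennreal ((norm (?v s))\<^sup>2) \<partial>S i)
       \<le> ennreal ((norm (ec_e Y t i + G (ec_x Y t) - h i))\<^sup>2 + \<sigma>\<^sup>2)" .
  have "ec_e (Y((t, i) := z)) (Suc t) i = ?v (fst z) - C (?v (fst z)) (snd z)" for z
    by (simp add: Let_def past algebra_simps)
  then have "(\<integral>\<^sup>+ z. ennreal ((norm (ec_e (Y((t, i) := z)) (Suc t) i))\<^sup>2) \<partial>coord (t, i))
      = (\<integral>\<^sup>+ z. ennreal ((norm (?v (fst z) - C (?v (fst z)) (snd z)))\<^sup>2) \<partial>(S i \<Otimes>\<^sub>M Q))"
    by (simp only: case_prod_conv)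
  also have "\<dots> \<le> ennreal (1 - \<delta>) * (\<integral>\<^sup>+ s. ennreal ((norm (?v s))\<^sup>2) \<partial>S i)"
    using Q_prob contractive
    by (intro nn_integral_compression_residual_le) (auto intro: prob_space_imp_sigma_finite)
  also have "\<dots> \<le> ennreal (1 - \<delta>) * ennreal ((norm (ec_e Y t i + G (ec_x Y t) - h i))\<^sup>2 + \<sigma>\<^sup>2)"
    using second_moment by (rule mult_left_mono) simp
  also have "\<dots> = ennreal ((1 - \<delta>) * ((norm (ec_e Y t i + G (ec_x Y t) - h i))\<^sup>2 + \<sigma>\<^sup>2))"
    by (simp add: ennreal_mult'')
  finally show "(\<integral>\<^sup>+ z. ennreal ((norm (ec_e (Y((t, i) := z)) (Suc t) i))\<^sup>2) \<partial>coord (t, i))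
      \<le> ennreal ((1 - \<delta>) * ((norm (ec_e Y t i + G (ec_x Y t) - h i))\<^sup>2 + \<sigma>\<^sup>2))" .
qed

lemma measurable_ec_x_ec_e [measurable]:
  "(\<lambda>\<omega>. ec_x \<omega> t) \<in> borel_measurable (ec_space S Q)"
  "(\<lambda>\<omega>. ec_e \<omega> t i) \<in> borel_measurable (ec_space S Q)"
  unfolding ec_space_eq_PiM by (intro measurable_ec_iter; simp)+

lemma ec_E_Suc_le:
  fixes G :: "nat \<Rightarrow> 'a \<Rightarrow> 'a"
  assumes unbiased: "\<And>i x. i < n \<Longrightarrow> integrable (S i) (g i x)"
      "\<And>i x. i < n \<Longrightarrow> (\<integral>s. g i x s \<partial>S i) = G i x"
    and variance: "\<And>i x. i < n \<Longrightarrow> (\<integral>\<^sup>+ s. ennreal ((norm (g i x s - G i x))\<^sup>2) \<partial>S i) \<le> ennreal (\<sigma>\<^sup>2)"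
    and contractive: "\<And>v. (\<integral>\<^sup>+ q. ennreal ((norm (C v q - v))\<^sup>2) \<partial>Q) \<le> ennreal ((1 - \<delta>) * (norm v)\<^sup>2)"
    and G_meas [measurable]: "\<And>i. i < n \<Longrightarrow> G i \<in> borel_measurable borel"
    and "\<delta> \<le> 1"
  shows "ec_E n S Q g C h \<gamma> x0 (Suc t)
    \<le> (\<integral>\<^sup>+ \<omega>. ennreal ((1 / real n) *
          (\<Sum>i<n. (1 - \<delta>) * ((norm (ec_e \<omega> t i + G i (ec_x \<omega> t) - h i))\<^sup>2 + \<sigma>\<^sup>2))) \<partial>ec_space S Q)"
proof -
  have "ec_E n S Q g C h \<gamma> x0 (Suc t)
      = ennreal (1 / real n) * (\<Sum>i<n. \<integral>\<^sup>+ \<omega>. ennreal ((norm (ec_e \<omega> (Suc t) i))\<^sup>2) \<partial>ec_space S Q)"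
    by (simp add: ec_E_def)
  also have "\<dots> \<le> ennreal (1 / real n) * (\<Sum>i<n. \<integral>\<^sup>+ \<omega>.
      ennreal ((1 - \<delta>) * ((norm (ec_e \<omega> t i + G i (ec_x \<omega> t) - h i))\<^sup>2 + \<sigma>\<^sup>2)) \<partial>ec_space S Q)"
    using unbiased variance contractive by (intro mult_left_mono sum_mono nn_integral_ec_e_Suc_le) auto
  also have "\<dots> = (\<integral>\<^sup>+ \<omega>. ennreal ((1 / real n) *
      (\<Sum>i<n. (1 - \<delta>) * ((norm (ec_e \<omega> t i + G i (ec_x \<omega> t) - h i))\<^sup>2 + \<sigma>\<^sup>2))) \<partial>ec_space S Q)"
    using \<open>\<delta> \<le> 1\<close> by (intro nn_integral_scaled_sum_ennreal) auto
  finally show ?thesis .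
qed

lemma nn_integral_affine_eq_ec_E_ec_F:
  assumes [measurable]: "F \<in> borel_measurable borel"
    and "\<And>x. Fstar \<le> F x" "0 \<le> a" "0 \<le> b" "0 \<le> c"
  shows "(\<integral>\<^sup>+ \<omega>. ennreal (a * ((1 / real n) * (\<Sum>i<n. (norm (ec_e \<omega> t i))\<^sup>2))
             + b * (F (ec_x \<omega> t) - Fstar) + c) \<partial>ec_space S Q)
    = ennreal a * ec_E n S Q g C h \<gamma> x0 t + ennreal b * ec_F n S Q g C h \<gamma> x0 F Fstar t + ennreal c"
proof -
  interpret prob_space "ec_space S Q"
    by (rule prob_space_ec_space)
  have E_eq: "ec_E n S Q g C h \<gamma> x0 t
      = (\<integral>\<^sup>+ \<omega>. ennreal ((1 / real n) * (\<Sum>i<n. (norm (ec_e \<omega> t i))\<^sup>2)) \<partial>ec_space S Q)"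
    unfolding ec_E_def by (intro nn_integral_scaled_sum_ennreal) auto
  show ?thesis
    unfolding E_eq ec_F_def
    by (rule nn_integral_affine_ennreal) (measurable, measurable, use assms in \<open>auto simp: sum_nonneg\<close>)
qed

end

theorem lemma13:
  fixes n :: nat
    and f :: "nat \<Rightarrow> 'a::euclidean_space \<Rightarrow> real"
    and G :: "nat \<Rightarrow> 'a \<Rightarrow> 'a"
    and g :: "nat \<Rightarrow> 'a \<Rightarrow> 's \<Rightarrow> 'a"
    and S :: "nat \<Rightarrow> 's measure"
    and C :: "'a \<Rightarrow> 'q \<Rightarrow> 'a"
    and Q :: "'q measure"
    and h :: "nat \<Rightarrow> 'a"
    and L \<sigma> \<delta> \<alpha> \<gamma> :: real
    and x0 xstar :: 'a
  assumes n_pos: "n \<ge> 1"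
    and grad: "\<And>i x. i < n \<Longrightarrow> (f i has_derivative (\<lambda>y. G i x \<bullet> y)) (at x)"
    and smooth: "\<And>i x y. i < n \<Longrightarrow> norm (G i x - G i y) \<le> L * norm (x - y)"
    and convex: "\<And>i. i < n \<Longrightarrow> convex_on UNIV (f i)"
    and minimizer: "\<And>x. (1 / real n) * (\<Sum>i<n. f i xstar) \<le> (1 / real n) * (\<Sum>i<n. f i x)"
    and S_prob: "\<And>i. prob_space (S i)"
    and g_meas: "\<And>i. (\<lambda>(x, s). g i x s) \<in> borel_measurable (borel \<Otimes>\<^sub>M S i)"
    and unbiased: "\<And>i x. i < n \<Longrightarrow> integrable (S i) (g i x) \<and> (\<integral>s. g i x s \<partial>S i) = G i x"
    and variance: "\<And>i x. i < n \<Longrightarrow>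
                     (\<integral>\<^sup>+ s. ennreal ((norm (g i x s - G i x))\<^sup>2) \<partial>S i) \<le> ennreal (\<sigma>\<^sup>2)"
    and Q_prob: "prob_space Q"
    and C_meas: "(\<lambda>(v, q). C v q) \<in> borel_measurable (borel \<Otimes>\<^sub>M Q)"
    and delta: "0 < \<delta>" "\<delta> \<le> 1"
    and contractive: "\<And>v. (\<integral>\<^sup>+ q. ennreal ((norm (C v q - v))\<^sup>2) \<partial>Q) \<le> ennreal ((1 - \<delta>) * (norm v)\<^sup>2)"
    and alpha: "(1 / real n) * (\<Sum>i<n. (norm (h i - G i xstar))\<^sup>2) \<le> \<alpha>"
  shows "ec_E n S Q g C h \<gamma> x0 (Suc t)
           \<le> ennreal (1 - \<delta> / 2) * ec_E n S Q g C h \<gamma> x0 t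
             + ennreal (8 * L / \<delta>) * ec_F n S Q g C h \<gamma> x0
                 (\<lambda>x. (1 / real n) * (\<Sum>i<n. f i x)) ((1 / real n) * (\<Sum>i<n. f i xstar)) t
             + ennreal (4 * \<alpha> / \<delta>) + ennreal (\<sigma>\<^sup>2)"
proof -
  interpret ec_model n g S C Q h \<gamma> x0
    by (rule ec_model.intro[OF S_prob g_meas Q_prob C_meas])
  define fbar where "fbar x = (1 / real n) * (\<Sum>i<n. f i x)" for x
  have "0 \<le> L"
    using lipschitz_constant_nonneg[OF smooth[of 0]] n_pos by simp
  have "0 \<le> (1 / real n) * (\<Sum>i<n. (norm (h i - G i xstar))\<^sup>2)"
    by (simp add: sum_nonneg)
  with alpha have "0 \<le> \<alpha>" by linarith
  have fbar_meas: "fbar \<in> borel_measurable borel"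
    using grad unfolding fbar_def
    by (intro borel_measurable_continuous_onI continuous_intros continuous_at_imp_continuous_on
        ballI has_derivative_continuous) auto
  have "ec_E n S Q g C h \<gamma> x0 (Suc t) \<le> (\<integral>\<^sup>+ \<omega>. ennreal ((1 / real n) *
      (\<Sum>i<n. (1 - \<delta>) * ((norm (ec_e \<omega> t i + G i (ec_x \<omega> t) - h i))\<^sup>2 + \<sigma>\<^sup>2))) \<partial>ec_space S Q)"
    using unbiased variance contractive smooth delta by (intro ec_E_Suc_le borel_measurable_lipschitz) auto
  also have "\<dots> \<le> (\<integral>\<^sup>+ \<omega>. ennreal ((1 - \<delta> / 2) * ((1 / real n) * (\<Sum>i<n. (norm (ec_e \<omega> t i))\<^sup>2))
      + (8 * L / \<delta>) * (fbar (ec_x \<omega> t) - fbar xstar) + (4 * \<alpha> / \<delta> + \<sigma>\<^sup>2)) \<partial>ec_space S Q)"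
    using error_recursion_pointwise[OF n_pos grad smooth convex minimizer delta alpha]
    by (intro nn_integral_mono ennreal_leI) (simp add: fbar_def add.assoc)
  also have "\<dots> = ennreal (1 - \<delta> / 2) * ec_E n S Q g C h \<gamma> x0 t
      + ennreal (8 * L / \<delta>) * ec_F n S Q g C h \<gamma> x0 fbar (fbar xstar) t + ennreal (4 * \<alpha> / \<delta> + \<sigma>\<^sup>2)"
    using fbar_meas minimizer delta \<open>0 \<le> L\<close> \<open>0 \<le> \<alpha>\<close>
    by (intro nn_integral_affine_eq_ec_E_ec_F fbar_meas) (auto simp: fbar_def)
  finally show ?thesis
    using delta \<open>0 \<le> \<alpha>\<close> by (simp add: fbar_def[abs_def] add.assoc)
qed

end
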